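(* Let $n,m$ be positive integers with $m+2\le n$, $G=P^m_n$ and $\mathcal R=\{G_i:i\in [n]\}$ a family of pairwise vertex-disjoint graphs. Then $$\gamma_{gr}(G\hookleftarrow \mathcal R)=\max_{I \in \tilde{\mathcal I}} \left\{\sum_{i\in I} (\gamma_{gr} (G_i)-1)+ M(I)-m(I)-|I|m\right\}+m+1.$$ Moreover, given a Grundy dominating sequence $S_i$ of $G_i$ for all $i\in [n]$ and $I^*\in \tilde{\mathcal I}$ attaining this maximum, the sequence obtained from $S_P(I^* )$ by replacing each $i\in I^*$ by $S_i$ (and each other vertex $j$ of $S_P(I^* )$ by a vertex of $G_j$) is a Grundy dominating sequence of $G\hookleftarrow \mathcal R$.
   Context: $P_n^m$ has vertex set $[n]$, distinct $i,j$ adjacent iff $|i-j|\le m$. For a non-empty set $I\subseteq[n]$, $m(I)=\min I$ and $M(I)=\max I$. $\tilde{\mathcal I}$ is the family of non-empty independent sets $I$ of $P_n^m$ with $m(I)\le m+1$ and $M(I)\ge n-m$. For $I=\{i^1<\dots<i^p\}\in\tilde{\mathcal I}$, let $S_j=(i^j,i^j+1,\dots,i^{j+1}-(m+1))$ for $j\in[p-1]$ and $S_P(I)=S_1\oplus\cdots\oplus S_{p-1}\oplus(i^p)$ (concatenation). The $X$-join product $G\hookleftarrow \mathcal R$ has vertex set $\bigcup_i V(G_i)$, the edges of all $G_i$, and all edges between $V(G_i)$ and $V(G_j)$ whenever $ij\in E(G)$. A legal dominating sequence of a graph is a sequence $(v_1,\dots,v_k)$ of distinct vertices whose set is dominating and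 such that each $N[v_i]\setminus\bigcup_{j<i}N[v_j]$ is non-empty ($N[\cdot]$ the closed neighborhood); a Grundy dominating sequence is one of maximum length, and $\gamma_{gr}$ is that length. *)

theory Defs
  imports Main
begin

record 'a graph =
  verts :: "'a set"
  adj :: "'a \<Rightarrow> 'a \<Rightarrow> bool"

definition wf_graph :: "('a, 'b) graph_scheme \<Rightarrow> bool" where
  "wf_graph G \<longleftrightarrow>
     (\<forall>x y. adj G x y \<longrightarrow> x \<in> verts G \<and> y \<in> verts G) \<and>
     (\<forall>x y. adj G x y \<longrightarrow> adj G y x) \<and>
     (\<forall>x. \<not> adj G x x)"

definition finite_graph :: "('a, 'b) graph_scheme \<Rightarrow> bool" where
  "finite_graph G \<longleftrightarrow> wf_graph G \<and> finite (verts G) \<and> verts G \<noteq> {}"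

definition cnbhd :: "('a, 'b) graph_scheme \<Rightarrow> 'a \<Rightarrow> 'a set" where
  "cnbhd G v = {v} \<union> {u \<in> verts G. adj G v u}"

definition legal_dom_seq :: "('a, 'b) graph_scheme \<Rightarrow> 'a list \<Rightarrow> bool" where
  "legal_dom_seq G s \<longleftrightarrow>
     distinct s \<and> set s \<subseteq> verts G \<and>
     (\<Union>v\<in>set s. cnbhd G v) = verts G \<and>
     (\<forall>i < length s. cnbhd G (s ! i) - (\<Union>j<i. cnbhd G (s ! j)) \<noteq> {})"

definition grundy_dom_seq :: "('a, 'b) graph_scheme \<Rightarrow> 'a list \<Rightarrow> bool" where
  "grundy_dom_seq G s \<longleftrightarrow> legal_dom_seq G s \<and>
     (\<forall>s'. legal_dom_seq G s' \<longrightarrow> length s' \<le> length s)"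

definition gamma_gr :: "('a, 'b) graph_scheme \<Rightarrow> nat" where
  "gamma_gr G = Max {length s | s. legal_dom_seq G s}"

definition path_power :: "nat \<Rightarrow> nat \<Rightarrow> nat graph" where
  "path_power n m = \<lparr> verts = {1..n},
     adj = (\<lambda>i j. i \<in> {1..n} \<and> j \<in> {1..n} \<and> i \<noteq> j \<and>
                  (i \<le> j + m \<and> j \<le> i + m)) \<rparr>"

definition xjoin :: "('i, 'c) graph_scheme \<Rightarrow> ('i \<Rightarrow> 'a graph) \<Rightarrow> 'a graph" where
  "xjoin G R = \<lparr> verts = (\<Union>i\<in>verts G. verts (R i)),
     adj = (\<lambda>x y. (\<exists>i\<in>verts G. adj (R i) x y) \<or>
                  (\<exists>i j. adj G i j \<and> x \<in> verts (R i) \<and> y \<in> verts (R j))) \<rparr>"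

definition indep_pp :: "nat \<Rightarrow> nat \<Rightarrow> nat set \<Rightarrow> bool" where
  "indep_pp n m I \<longleftrightarrow> I \<subseteq> {1..n} \<and>
     (\<forall>i\<in>I. \<forall>j\<in>I. i \<noteq> j \<longrightarrow> \<not> (i \<le> j + m \<and> j \<le> i + m))"

definition tildeI :: "nat \<Rightarrow> nat \<Rightarrow> nat set set" where
  "tildeI n m = {I. indep_pp n m I \<and> I \<noteq> {} \<and> Min I \<le> m + 1 \<and> n - m \<le> Max I}"

fun SP_list :: "nat \<Rightarrow> nat list \<Rightarrow> nat list" where
  "SP_list m [] = []"
| "SP_list m [x] = [x]"
| "SP_list m (x # y # xs) = [x..<y - m] @ SP_list m (y # xs)"

definition SP :: "nat \<Rightarrow> nat set \<Rightarrow> nat list" where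
  "SP m I = SP_list m (sorted_list_of_set I)"

definition obj :: "nat \<Rightarrow> (nat \<Rightarrow> 'a graph) \<Rightarrow> nat set \<Rightarrow> int" where
  "obj m R I = (\<Sum>i\<in>I. int (gamma_gr (R i)) - 1) + int (Max I) - int (Min I) - int (card I * m)"

end

theory Submission
  imports Defs
begin

text \<open>
  Along a legal sequence of the X-join call a visited block \<open>t\<close> primary if no
  block adjacent to \<open>t\<close> in \<open>P_n^m\<close> was visited before \<open>t\<close>. Primary blocks are pairwise
  non-adjacent. A non-primary block is visited only once, since afterwards its closed neighbourhood
  is dominated, and that visit footprints a vertex in an adjacent block \<open>w t\<close> that no earlier
  block is adjacent to; \<open>w\<close> is injective, and between two consecutive primary blocks the
  witnesses keep at distance \<open>m\<close> from the block visited first. Padding the primary blocks with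
  \<open>1\<close> and \<open>n\<close> where needed gives some \<open>I \<in> tildeI n m\<close>, and counting gaps gives
  length at most \<open>obj I + m + 1\<close>: the visits to a primary block \<open>i\<close> form a legal sequence of
  \<open>G_i\<close>, of length below \<open>\<gamma>_gr(G_i)\<close> if \<open>i\<close> is also a witness.

  The sequence \<open>S_P(I)\<close>, with \<open>i \<in> I\<close> replaced by a Grundy dominating
  sequence of \<open>G_i\<close> and any other \<open>j\<close> by one vertex of \<open>G_j\<close>, is legal (such a vertex
  footprints the untouched block \<open>j + m\<close>) and dominating, of length \<open>obj I + m + 1\<close>.
\<close>

section \<open>Legal sequences\<close>

abbreviation dominated :: "('a, 'b) graph_scheme \<Rightarrow> 'a list \<Rightarrow> 'a set" where
  "dominated G s \<equiv> \<Union>v\<in>set s. cnbhd G v"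

definition legal_seq :: "('a, 'b) graph_scheme \<Rightarrow> 'a list \<Rightarrow> bool" where
  "legal_seq G s \<longleftrightarrow> distinct s \<and> set s \<subseteq> verts G \<and>
     (\<forall>i < length s. cnbhd G (s ! i) - dominated G (take i s) \<noteq> {})"

lemma self_in_cnbhd: "x \<in> cnbhd G x"
  by (simp add: cnbhd_def)

lemma dominated_subset_verts: "set s \<subseteq> verts G \<Longrightarrow> dominated G s \<subseteq> verts G"
  by (auto simp: cnbhd_def)

lemma legal_dom_seq_iff: "legal_dom_seq G s \<longleftrightarrow> legal_seq G s \<and> dominated G s = verts G"
proof -
  have "set (take i s) = (!) s ` {..<i}" if "i < length s" for i
    using nth_image[of i s] that by (simp add: atLeast0LessThan)
  then have "(\<Union>j<i. cnbhd G (s ! j)) = dominated G (take i s)" if "i < length s" for i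
    using that by (simp add: image_image)
  then show ?thesis
    unfolding legal_dom_seq_def legal_seq_def by auto
qed

lemma legal_seq_Nil [simp]: "legal_seq G []"
  by (simp add: legal_seq_def)

lemma legal_seq_snoc:
  "legal_seq G (s @ [x]) \<longleftrightarrow>
     legal_seq G s \<and> x \<in> verts G \<and> cnbhd G x - dominated G s \<noteq> {}"
proof -
  have new_distinct: "x \<notin> set s" if "cnbhd G x - dominated G s \<noteq> {}"
    using that self_in_cnbhd[of x G] by blast
  have split_last: "(\<forall>i < length (s @ [x]). Q i) \<longleftrightarrow> (\<forall>i < length s. Q i) \<and> Q (length s)" for Q
    by (simp add: All_less_Suc conj_commute)
  have "take i (s @ [x]) = take i s" "(s @ [x]) ! i = s ! i" if "i < length s" for i
    using that by (simp_all add: nth_append)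
  then have footprints:
    "(\<forall>i < length (s @ [x]). cnbhd G ((s @ [x]) ! i) - dominated G (take i (s @ [x])) \<noteq> {})
      \<longleftrightarrow> (\<forall>i < length s. cnbhd G (s ! i) - dominated G (take i s) \<noteq> {}) \<and>
          cnbhd G x - dominated G s \<noteq> {}"
    unfolding split_last by simp
  have "distinct (s @ [x]) \<longleftrightarrow> distinct s \<and> x \<notin> set s"
    and "set (s @ [x]) \<subseteq> verts G \<longleftrightarrow> set s \<subseteq> verts G \<and> x \<in> verts G"
    by auto
  then show ?thesis
    unfolding legal_seq_def footprints using new_distinct by auto
qed

lemma legal_seq_filter:
  assumes "set (filter P s) \<subseteq> verts G"
    and "\<And>i. i < length s \<Longrightarrow> P (s ! i) \<Longrightarrow>
           cnbhd G (s ! i) - dominated G (filter P (take i s)) \<noteq> {}"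
  shows "legal_seq G (filter P s)"
  using assms
proof (induction s rule: rev_induct)
  case Nil
  then show ?case by simp
next
  case (snoc x s)
  have "legal_seq G (filter P s)"
  proof (rule snoc.IH)
    show "set (filter P s) \<subseteq> verts G"
      using snoc.prems(1) by auto
    show "cnbhd G (s ! i) - dominated G (filter P (take i s)) \<noteq> {}"
      if "i < length s" "P (s ! i)" for i
      using snoc.prems(2)[of i] that by (simp add: nth_append)
  qed
  moreover have "cnbhd G x - dominated G (filter P s) \<noteq> {}" if "P x"
    using snoc.prems(2)[of "length s"] that by simp
  moreover have "x \<in> verts G" if "P x"
    using snoc.prems(1) that by simp
  ultimately show ?case
    by (simp add: legal_seq_snoc)
qed

lemma legal_seq_extend:
  assumes "finite (verts G)" and "legal_seq G s"
  shows "\<exists>u. legal_dom_seq G (s @ u) \<and> (dominated G s \<noteq> verts G \<longrightarrow> u \<noteq> [])"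
  using assms(2)
proof (induction "card (verts G - dominated G s)" arbitrary: s rule: less_induct)
  case less
  show ?case
  proof (cases "dominated G s = verts G")
    case True
    with less.prems show ?thesis
      by (intro exI[of _ "[]"]) (simp add: legal_dom_seq_iff)
  next
    case False
    have "set s \<subseteq> verts G"
      using less.prems unfolding legal_seq_def by simp
    then have "dominated G s \<subseteq> verts G"
      by (rule dominated_subset_verts)
    with False obtain x where x: "x \<in> verts G - dominated G s"
      using psubset_imp_ex_mem psubsetI by metis
    then have "cnbhd G x - dominated G s \<noteq> {}"
      using self_in_cnbhd[of x G] by blast
    with less.prems x have legal_x: "legal_seq G (s @ [x])"
      by (simp add: legal_seq_snoc)
    have "x \<notin> verts G - dominated G (s @ [x])"
      using self_in_cnbhd[of x G] by simp
    moreover have "verts G - dominated G (s @ [x]) \<subseteq> verts G - dominated G s"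
      by auto
    ultimately have "verts G - dominated G (s @ [x]) \<subset> verts G - dominated G s"
      using x unfolding psubset_eq by metis
    then have "card (verts G - dominated G (s @ [x])) < card (verts G - dominated G s)"
      using assms(1) by (simp add: psubset_card_mono)
    from less.hyps[OF this legal_x] obtain u where "legal_dom_seq G (s @ [x] @ u)"
      by auto
    then show ?thesis
      by (intro exI[of _ "x # u"]) simp
  qed
qed

lemma finite_legal_dom_seq_lengths:
  assumes "finite (verts G)"
  shows "finite {length s | s. legal_dom_seq G s}"
proof (rule finite_subset)
  have "length s \<le> card (verts G)" if "legal_dom_seq G s" for s
  proof -
    have "distinct s" "set s \<subseteq> verts G"
      using that unfolding legal_dom_seq_def by auto
    then have "card (set s) \<le> card (verts G)"
      by (simp add: card_mono[OF assms])
    with \<open>distinct s\<close> show ?thesis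
      by (simp add: distinct_card)
  qed
  then show "{length s | s. legal_dom_seq G s} \<subseteq> {..card (verts G)}"
    by auto
qed simp

lemma legal_seq_length_le_gamma_gr:
  assumes "finite (verts G)" and "legal_seq G s"
  shows "length s \<le> gamma_gr G"
    and "dominated G s \<noteq> verts G \<Longrightarrow> length s < gamma_gr G"
proof -
  obtain u where u: "legal_dom_seq G (s @ u)" "dominated G s \<noteq> verts G \<longrightarrow> u \<noteq> []"
    using legal_seq_extend[OF assms] by blast
  have "length (s @ u) \<in> {length s | s. legal_dom_seq G s}"
    using u(1) by blast
  then have "length (s @ u) \<le> gamma_gr G"
    unfolding gamma_gr_def using finite_legal_dom_seq_lengths[OF assms(1)] by simp
  then show "length s \<le> gamma_gr G"
    by simp
  show "length s < gamma_gr G" if "dominated G s \<noteq> verts G"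
    using \<open>length (s @ u) \<le> gamma_gr G\<close> mp[OF u(2) that] by (cases u) simp_all
qed

lemma gamma_gr_pos:
  assumes "finite (verts G)" and "verts G \<noteq> {}"
  shows "1 \<le> gamma_gr G"
  using legal_seq_length_le_gamma_gr(2)[OF assms(1) legal_seq_Nil] assms(2) by simp

lemma gamma_gr_attained:
  assumes "finite (verts G)"
  shows "\<exists>s. legal_dom_seq G s \<and> length s = gamma_gr G"
proof -
  have "{length s | s. legal_dom_seq G s} \<noteq> {}"
    using legal_seq_extend[OF assms legal_seq_Nil] by auto
  then have "gamma_gr G \<in> {length s | s. legal_dom_seq G s}"
    unfolding gamma_gr_def using finite_legal_dom_seq_lengths[OF assms] by (rule Max_in[rotated])
  then show ?thesis
    by auto
qed

lemma grundy_dom_seq_iff: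
  assumes "finite (verts G)"
  shows "grundy_dom_seq G s \<longleftrightarrow> legal_dom_seq G s \<and> length s = gamma_gr G"
proof -
  obtain t where t: "legal_dom_seq G t" "length t = gamma_gr G"
    using gamma_gr_attained[OF assms] by blast
  have le: "length s' \<le> gamma_gr G" if "legal_dom_seq G s'" for s'
    using legal_seq_length_le_gamma_gr(1)[OF assms] that by (simp add: legal_dom_seq_iff)
  show ?thesis
  proof
    assume "grundy_dom_seq G s"
    then have "legal_dom_seq G s" "length t \<le> length s"
      unfolding grundy_dom_seq_def using t(1) by auto
    with t(2) le[of s] show "legal_dom_seq G s \<and> length s = gamma_gr G"
      by simp
  next
    assume "legal_dom_seq G s \<and> length s = gamma_gr G"
    with le show "grundy_dom_seq G s"
      unfolding grundy_dom_seq_def by simp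
  qed
qed

section \<open>Gaps between primary blocks\<close>

text \<open>Adjacency of \<open>path_power n m\<close>, without the range condition \<open>{1..n}\<close>.\<close>

definition pp_adj :: "nat \<Rightarrow> nat \<Rightarrow> nat \<Rightarrow> bool" where
  "pp_adj m i j \<longleftrightarrow> i \<noteq> j \<and> i \<le> j + m \<and> j \<le> i + m"

definition consecutive :: "nat set \<Rightarrow> nat \<Rightarrow> nat \<Rightarrow> bool" where
  "consecutive I a b \<longleftrightarrow> a \<in> I \<and> b \<in> I \<and> a < b \<and> (\<forall>c\<in>I. \<not> (a < c \<and> c < b))"

lemma consecutive_insert_greater:
  assumes "finite A" "A \<noteq> {}" "\<forall>a\<in>A. a < b"
  shows "consecutive A x y \<Longrightarrow> consecutive (insert b A) x y"
    and "consecutive (insert b A) (Max A) b"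
proof -
  show "consecutive (insert b A) x y" if "consecutive A x y"
    using that assms(3) unfolding consecutive_def by auto
  have "Max A \<in> A"
    using assms(1,2) by simp
  show "consecutive (insert b A) (Max A) b"
    unfolding consecutive_def
  proof (intro conjI ballI)
    show "Max A \<in> insert b A" "b \<in> insert b A" "Max A < b"
      using \<open>Max A \<in> A\<close> assms(3) by auto
    show "\<not> (Max A < c \<and> c < b)" if "c \<in> insert b A" for c
      using that Max_ge[OF assms(1), of c] by auto
  qed
qed

lemma card_between_Min_Max_le_gaps:
  fixes I U :: "nat set"
  assumes "finite I" and "I \<noteq> {}"
    and "\<And>a b. consecutive I a b \<Longrightarrow> card (U \<inter> {a..<b}) + m \<le> b - a"
  shows "card (U \<inter> {Min I..<Max I}) + m * (card I - 1) \<le> Max I - Min I"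
  using assms
proof (induction I rule: finite_linorder_max_induct)
  case empty
  then show ?case by simp
next
  case (insert b A)
  show ?case
  proof (cases "A = {}")
    case True
    then show ?thesis by simp
  next
    case False
    define a where "a = Max A"
    have a: "a \<in> A" "a < b" "Min A \<le> a"
      using False insert.hyps by (auto simp: a_def)
    then have "Min A \<le> b"
      by linarith
    then have "Min (insert b A) = Min A"
      unfolding Min_insert[OF insert.hyps(1) False] by (rule min_absorb2)
    moreover have "Max (insert b A) = b"
      unfolding Max_insert[OF insert.hyps(1) False] a_def[symmetric] using a by simp
    ultimately have extremes: "Min (insert b A) = Min A" "Max (insert b A) = b" .
    note consecutive = consecutive_insert_greater[OF insert.hyps(1) False insert.hyps(2)]
    have IH: "card (U \<inter> {Min A..<a}) + m * (card A - 1) \<le> a - Min A"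
      using insert.IH[OF False] insert.prems(2) consecutive(1) by (simp add: a_def)
    have last_gap: "card (U \<inter> {a..<b}) + m \<le> b - a"
      using insert.prems(2) consecutive(2) unfolding a_def by blast
    have "U \<inter> {Min A..<b} = U \<inter> {Min A..<a} \<union> U \<inter> {a..<b}"
      using a by auto
    then have split: "card (U \<inter> {Min A..<b}) \<le> card (U \<inter> {Min A..<a}) + card (U \<inter> {a..<b})"
      by (simp add: card_Un_le)
    have "card A \<ge> 1" "b \<notin> A"
      using insert.hyps False by (auto simp: Suc_le_eq card_gt_0_iff)
    then have "m * (card (insert b A) - 1) = m * (card A - 1) + m"
      using insert.hyps(1) by (cases "card A") simp_all
    then show ?thesis
      unfolding extremes using split IH last_gap a by linarith
  qed
qed

lemma card_le_gaps:
  fixes I U :: "nat set"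
  assumes "finite I" and "I \<noteq> {}" and "U \<subseteq> {Min I..Max I}"
    and "\<And>a b. consecutive I a b \<Longrightarrow> card (U \<inter> {a..<b}) + m \<le> b - a"
  shows "card U + m * (card I - 1) \<le> Max I + 1 - Min I"
proof -
  have "U \<subseteq> insert (Max I) (U \<inter> {Min I..<Max I})"
    using assms(3) by auto
  then have "card U \<le> card (insert (Max I) (U \<inter> {Min I..<Max I}))"
    by (rule card_mono[rotated]) simp
  also have "\<dots> \<le> Suc (card (U \<inter> {Min I..<Max I}))"
    by (simp add: card_insert_if)
  finally have "card U \<le> Suc (card (U \<inter> {Min I..<Max I}))" .
  moreover have "Min I \<le> Max I"
    using assms(1,2) by simp
  ultimately show ?thesis
    using card_between_Min_Max_le_gaps[OF assms(1,2,4)] by linarith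
qed

text \<open>
  An abstraction of a legal sequence of the X-join: \<open>T\<close> is the set of visited blocks,
  \<open>ft t\<close> the time of the first visit to \<open>t\<close>, and \<open>w t\<close> a block receiving a footprinted
  vertex at the first visit to a non-primary block \<open>t\<close>.
\<close>

locale visit_pattern =
  fixes n m :: nat and T :: "nat set" and ft w :: "nat \<Rightarrow> nat"
  assumes visited_subset: "T \<subseteq> {1..n}"
    and inj_ft: "inj_on ft T"
    and witness_spec: "\<And>t. t \<in> T \<Longrightarrow> \<exists>t'\<in>T. ft t' < ft t \<and> pp_adj m t' t \<Longrightarrow>
         w t \<in> {1..n} \<and> pp_adj m t (w t) \<and> (\<forall>t'\<in>T. ft t' < ft t \<longrightarrow> \<not> pp_adj m t' (w t))"
    and path_long: "m + 2 \<le> n"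
begin

definition primary :: "nat set" where
  "primary = {t\<in>T. \<forall>t'\<in>T. ft t' < ft t \<longrightarrow> \<not> pp_adj m t' t}"

definition witnesses :: "nat set" where
  "witnesses = w ` (T - primary) - primary"

definition anchors :: "nat set" where
  "anchors = primary \<union> (if \<exists>t\<in>primary. t \<le> m + 1 then {} else {1})
                     \<union> (if \<exists>t\<in>primary. n - m \<le> t then {} else {n})"

text \<open>The positions \<open>0\<close> and \<open>n + 1\<close> act as sentinel primary blocks.\<close>

definition primary_gap :: "nat \<Rightarrow> nat \<Rightarrow> bool" where
  "primary_gap a b \<longleftrightarrow> (a \<in> primary \<or> a = 0) \<and> (b \<in> primary \<or> b = n + 1) \<and> a < b \<and>
     (\<forall>d\<in>primary. \<not> (a < d \<and> d < b))"

lemma primary_subset: "primary \<subseteq> T"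
  unfolding primary_def by auto

lemma witness_nonprimary:
  assumes "t \<in> T - primary"
  shows "w t \<in> {1..n}" "pp_adj m t (w t)" "\<And>t'. t' \<in> T \<Longrightarrow> ft t' < ft t \<Longrightarrow> \<not> pp_adj m t' (w t)"
  using assms witness_spec unfolding primary_def by auto

lemma ft_less_cases:
  assumes "t \<in> T" "t' \<in> T" "t \<noteq> t'"
  obtains "ft t < ft t'" | "ft t' < ft t"
  using assms inj_ft by (meson inj_on_contraD linorder_neqE_nat)

lemma primary_not_adj:
  assumes "d \<in> primary" "d' \<in> primary"
  shows "\<not> pp_adj m d d'"
proof
  assume adj: "pp_adj m d d'"
  then have "d \<noteq> d'" "pp_adj m d' d"
    unfolding pp_adj_def by auto
  have "d \<in> T" "d' \<in> T"
    using assms primary_subset by auto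
  show False
  proof (rule ft_less_cases[OF \<open>d \<in> T\<close> \<open>d' \<in> T\<close> \<open>d \<noteq> d'\<close>])
    assume "ft d < ft d'"
    with \<open>d \<in> T\<close> \<open>pp_adj m d d'\<close> assms(2) show False
      unfolding primary_def by blast
  next
    assume "ft d' < ft d"
    with \<open>d' \<in> T\<close> \<open>pp_adj m d' d\<close> assms(1) show False
      unfolding primary_def by blast
  qed
qed

lemma primary_not_between:
  assumes d: "d \<in> primary" and t: "t \<in> T - primary"
    and between: "t < d \<and> d < w t \<or> w t < d \<and> d < t"
  shows False
proof -
  have "pp_adj m t (w t)"
    using witness_nonprimary[OF t] by simp
  with between have adj: "pp_adj m t d" "pp_adj m d (w t)"
    unfolding pp_adj_def by auto
  have "d \<in> T" "t \<in> T" "d \<noteq> t"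
    using d t primary_subset by auto
  show False
  proof (rule ft_less_cases[OF \<open>d \<in> T\<close> \<open>t \<in> T\<close> \<open>d \<noteq> t\<close>])
    assume "ft d < ft t"
    then show False
      using witness_nonprimary(3)[OF t \<open>d \<in> T\<close>] adj(2) by blast
  next
    assume "ft t < ft d"
    with \<open>t \<in> T\<close> d adj(1) show False
      unfolding primary_def by blast
  qed
qed

lemma witness_source_in_gap:
  assumes gap: "primary_gap a b" and t: "t \<in> T - primary" and "a < w t" "w t < b"
  shows "a < t \<and> t < b"
proof -
  have t_range: "1 \<le> t" "t \<le> n"
    using t visited_subset by auto
  have "\<not> t \<le> a"
  proof
    assume "t \<le> a"
    with gap t_range have "a \<in> primary"
      unfolding primary_gap_def by auto
    with t \<open>t \<le> a\<close> have "t < a"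
      using le_neq_implies_less by blast
    with \<open>a \<in> primary\<close> t \<open>a < w t\<close> show False
      using primary_not_between by blast
  qed
  moreover have "\<not> b \<le> t"
  proof
    assume "b \<le> t"
    with gap t_range have "b \<in> primary"
      unfolding primary_gap_def by auto
    with t \<open>b \<le> t\<close> have "b < t"
      using le_neq_implies_less by blast
    with \<open>b \<in> primary\<close> t \<open>w t < b\<close> show False
      using primary_not_between by blast
  qed
  ultimately show ?thesis
    by simp
qed

lemma first_visited_in_gap:
  assumes gap: "primary_gap a b" and e: "e \<in> T" "a \<le> e" "e \<le> b"
    and first: "\<And>e'. e' \<in> T \<Longrightarrow> a \<le> e' \<Longrightarrow> e' \<le> b \<Longrightarrow> ft e \<le> ft e'"
  shows "e = a \<or> e = b"
proof (rule ccontr)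
  assume "\<not> (e = a \<or> e = b)"
  with e have inside: "a < e" "e < b"
    by auto
  with gap have "e \<notin> primary"
    unfolding primary_gap_def by auto
  with e(1) obtain t' where t': "t' \<in> T" "ft t' < ft e" "pp_adj m t' e"
    unfolding primary_def by auto
  with first have "t' < a \<or> b < t'"
    by (meson leD not_le)
  moreover have "1 \<le> t'" "t' \<le> n"
    using t'(1) visited_subset by auto
  ultimately consider "t' < a" "a \<in> primary" | "b < t'" "b \<in> primary"
    using gap unfolding primary_gap_def by auto
  then show False
  proof cases
    case 1
    then have "pp_adj m t' a" "ft t' < ft a"
      using t' inside first[of a] primary_subset unfolding pp_adj_def by auto
    with t'(1) \<open>a \<in> primary\<close> show False
      unfolding primary_def by blast
  next
    case 2
    then have "pp_adj m t' b" "ft t' < ft b"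
      using t' inside first[of b] primary_subset unfolding pp_adj_def by auto
    with t'(1) \<open>b \<in> primary\<close> show False
      unfolding primary_def by blast
  qed
qed

lemma first_visited_not_adj_witness:
  assumes gap: "primary_gap a b" and e: "e \<in> T" "e \<in> primary"
    and first: "\<And>e'. e' \<in> T \<Longrightarrow> a \<le> e' \<Longrightarrow> e' \<le> b \<Longrightarrow> ft e \<le> ft e'"
    and j: "j \<in> witnesses" "a < j" "j < b"
  shows "\<not> pp_adj m e j"
proof -
  obtain t where t: "t \<in> T - primary" "j = w t"
    using j(1) unfolding witnesses_def by blast
  then have "a < t" "t < b" "t \<noteq> e"
    using witness_source_in_gap[OF gap] j e(2) by auto
  then have "ft e < ft t"
    using first[of t] t(1) e(1) inj_ft by (metis DiffD1 inj_on_eq_iff le_neq_implies_less less_imp_le)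
  then show ?thesis
    using witness_nonprimary(3)[OF t(1) e(1)] t(2) by blast
qed

lemma witnesses_in_gap:
  assumes gap: "primary_gap a b"
  shows "(\<forall>j\<in>witnesses. \<not> (a < j \<and> j < b)) \<or>
         a \<in> primary \<and> (\<forall>j\<in>witnesses. a < j \<and> j < b \<longrightarrow> a + m < j) \<or>
         b \<in> primary \<and> (\<forall>j\<in>witnesses. a < j \<and> j < b \<longrightarrow> j + m < b)"
proof (cases "\<exists>t\<in>T. a < t \<and> t < b")
  case False
  then show ?thesis
    unfolding witnesses_def using witness_source_in_gap[OF gap] by blast
next
  case True
  then obtain t0 where "t0 \<in> T \<and> a \<le> t0 \<and> t0 \<le> b"
    using less_imp_le by blast
  then obtain e where e: "e \<in> T" "a \<le> e" "e \<le> b"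
    and first: "\<And>e'. e' \<in> T \<Longrightarrow> a \<le> e' \<Longrightarrow> e' \<le> b \<Longrightarrow> ft e \<le> ft e'"
    using ex_has_least_nat[of "\<lambda>x. x \<in> T \<and> a \<le> x \<and> x \<le> b" t0 ft] by blast
  have e_end: "e = a \<or> e = b"
    using first_visited_in_gap[OF gap e first] .
  moreover have "e \<in> {1..n}"
    using e(1) visited_subset by auto
  ultimately have "e \<in> primary"
    using gap unfolding primary_gap_def by auto
  note far = first_visited_not_adj_witness[OF gap e(1) this first]
  from e_end show ?thesis
  proof
    assume "e = a"
    with far \<open>e \<in> primary\<close> show ?thesis
      unfolding pp_adj_def by fastforce
  next
    assume "e = b"
    with far \<open>e \<in> primary\<close> show ?thesis
      unfolding pp_adj_def by fastforce
  qed
qed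

lemma primary_subset_anchors: "primary \<subseteq> anchors"
  unfolding anchors_def by auto

lemma anchors_cases:
  assumes "i \<in> anchors"
  obtains "i \<in> primary"
  | "i = 1" "\<forall>t\<in>primary. m + 1 < t"
  | "i = n" "\<forall>t\<in>primary. t < n - m"
proof -
  have "i \<in> primary \<or> i = 1 \<and> (\<forall>t\<in>primary. m + 1 < t) \<or> i = n \<and> (\<forall>t\<in>primary. t < n - m)"
    using assms unfolding anchors_def by (auto split: if_splits simp: not_le)
  then show ?thesis
    using that by blast
qed

lemma finite_visited: "finite T"
  using finite_subset[OF visited_subset] by simp

lemma finite_primary: "finite primary"
  using finite_subset[OF primary_subset finite_visited] .

lemma anchors_subset: "anchors \<subseteq> {1..n}"
  using primary_subset visited_subset path_long unfolding anchors_def by auto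

lemma finite_anchors: "finite anchors"
  using finite_subset[OF anchors_subset] by simp

lemma anchors_nonempty: "anchors \<noteq> {}"
  unfolding anchors_def by auto

lemma anchors_not_adj:
  assumes "i \<in> anchors" "j \<in> anchors"
  shows "\<not> pp_adj m i j"
  using assms by (elim anchors_cases) (use primary_not_adj path_long in \<open>auto simp: pp_adj_def\<close>)

lemma Min_anchors: "Min anchors \<le> m + 1"
proof (cases "\<exists>t\<in>primary. t \<le> m + 1")
  case True
  then obtain t where "t \<in> anchors" "t \<le> m + 1"
    using primary_subset_anchors by blast
  then show ?thesis
    using Min_le[OF finite_anchors, of t] by linarith
next
  case False
  then have "1 \<in> anchors"
    unfolding anchors_def by simp
  then show ?thesis
    using Min_le[OF finite_anchors, of 1] by linarith
qed

lemma Max_anchors: "n - m \<le> Max anchors"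
proof (cases "\<exists>t\<in>primary. n - m \<le> t")
  case True
  then obtain t where "t \<in> anchors" "n - m \<le> t"
    using primary_subset_anchors by blast
  then show ?thesis
    using Max_ge[OF finite_anchors, of t] by linarith
next
  case False
  then have "n \<in> anchors"
    unfolding anchors_def by simp
  then show ?thesis
    using Max_ge[OF finite_anchors, of n] by linarith
qed

lemma anchors_in_tildeI: "anchors \<in> tildeI n m"
  using anchors_subset anchors_nonempty anchors_not_adj Min_anchors Max_anchors
  unfolding tildeI_def indep_pp_def pp_adj_def by blast

lemma consecutive_anchors_primary_gap:
  assumes "consecutive anchors a b"
  shows "primary_gap (if a \<in> primary then a else 0) (if b \<in> primary then b else n + 1)"
proof -
  have ab: "a \<in> anchors" "b \<in> anchors" "a < b" "\<forall>c\<in>anchors. \<not> (a < c \<and> c < b)"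
    using assms unfolding consecutive_def by auto
  have "a \<le> n" "1 \<le> a" "b \<le> n"
    using ab anchors_subset by auto
  have a_cases: "a \<in> primary \<or> a = 1 \<and> (\<forall>t\<in>primary. m + 1 < t)"
    using ab(1) by (cases rule: anchors_cases) (use ab \<open>b \<le> n\<close> in auto)
  have b_cases: "b \<in> primary \<or> b = n \<and> (\<forall>t\<in>primary. t < n - m)"
    using ab(2) by (cases rule: anchors_cases) (use ab \<open>1 \<le> a\<close> in auto)
  have "\<not> (a < d \<and> d < b)" if "d \<in> primary" for d
    using ab(4) primary_subset_anchors that by blast
  with a_cases b_cases show ?thesis
    unfolding primary_gap_def using ab(3) by fastforce
qed

lemma consecutive_anchors_elements:
  assumes "consecutive anchors a b" and "u \<in> (primary \<union> witnesses) \<inter> {a..<b}"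
  shows "u = a \<or> u \<in> witnesses \<and> a < u"
  using assms primary_subset_anchors unfolding consecutive_def by fastforce

lemma consecutive_anchors_far: "consecutive anchors a b \<Longrightarrow> a + m < b"
  using anchors_not_adj unfolding consecutive_def pp_adj_def by fastforce

lemma anchors_gap_cases:
  assumes cons: "consecutive anchors a b"
  obtains "(primary \<union> witnesses) \<inter> {a..<b} \<subseteq> {a}"
  | "(primary \<union> witnesses) \<inter> {a..<b} \<subseteq> insert a {a + m<..<b}"
  | "(primary \<union> witnesses) \<inter> {a..<b} \<subseteq> {a..<b - m}"
proof -
  define a' where "a' = (if a \<in> primary then a else 0)"
  define b' where "b' = (if b \<in> primary then b else n + 1)"
  have "a' \<le> a" "b \<le> b'"
    using cons anchors_subset unfolding a'_def b'_def consecutive_def by auto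
  have "0 \<notin> primary" "n + 1 \<notin> primary"
    using primary_subset visited_subset by auto
  note elements = consecutive_anchors_elements[OF cons]
  have "primary_gap a' b'"
    unfolding a'_def b'_def using consecutive_anchors_primary_gap[OF cons] .
  from witnesses_in_gap[OF this] show ?thesis
  proof (elim disjE conjE)
    assume "\<forall>j\<in>witnesses. \<not> (a' < j \<and> j < b')"
    then have "(primary \<union> witnesses) \<inter> {a..<b} \<subseteq> {a}"
      using elements \<open>a' \<le> a\<close> \<open>b \<le> b'\<close> by fastforce
    then show ?thesis
      by (rule that(1))
  next
    assume "a' \<in> primary" "\<forall>j\<in>witnesses. a' < j \<and> j < b' \<longrightarrow> a' + m < j"
    moreover from this(1) have "a' = a"
      using \<open>0 \<notin> primary\<close> unfolding a'_def by (auto split: if_splits)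
    ultimately have "(primary \<union> witnesses) \<inter> {a..<b} \<subseteq> insert a {a + m<..<b}"
      using elements \<open>b \<le> b'\<close> by fastforce
    then show ?thesis
      by (rule that(2))
  next
    assume "b' \<in> primary" "\<forall>j\<in>witnesses. a' < j \<and> j < b' \<longrightarrow> j + m < b'"
    moreover from this(1) have "b' = b"
      using \<open>n + 1 \<notin> primary\<close> unfolding b'_def by (auto split: if_splits)
    ultimately have "(primary \<union> witnesses) \<inter> {a..<b} \<subseteq> {a..<b - m}"
      using elements consecutive_anchors_far[OF cons] \<open>a' \<le> a\<close> by fastforce
    then show ?thesis
      by (rule that(3))
  qed
qed

lemma anchors_gap_card:
  assumes cons: "consecutive anchors a b"
  shows "card ((primary \<union> witnesses) \<inter> {a..<b}) + m \<le> b - a"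
proof -
  have far: "a + m < b"
    using consecutive_anchors_far[OF cons] .
  from cons show ?thesis
  proof (cases rule: anchors_gap_cases)
    case 1
    then have "card ((primary \<union> witnesses) \<inter> {a..<b}) \<le> card {a}"
      by (rule card_mono[rotated]) simp
    with far show ?thesis
      by simp
  next
    case 2
    then have "card ((primary \<union> witnesses) \<inter> {a..<b}) \<le> card (insert a {a + m<..<b})"
      by (rule card_mono[rotated]) simp
    also have "\<dots> \<le> Suc (b - (a + m) - 1)"
      by (simp add: card_insert_if)
    finally show ?thesis
      using far by linarith
  next
    case 3
    then have "card ((primary \<union> witnesses) \<inter> {a..<b}) \<le> card {a..<b - m}"
      by (rule card_mono[rotated]) simp
    with far show ?thesis
      by simp
  qed
qed

lemma witnesses_range: "witnesses \<subseteq> {1..n}"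
  unfolding witnesses_def using witness_nonprimary(1) by auto

lemma Min_anchors_le_witness:
  assumes j: "j \<in> witnesses"
  shows "Min anchors \<le> j"
proof (rule ccontr)
  assume "\<not> Min anchors \<le> j"
  then have less: "j < Min anchors" by simp
  have "1 \<le> j"
    using j witnesses_range by auto
  have first: "Min anchors \<in> anchors" "\<And>i. i \<in> anchors \<Longrightarrow> Min anchors \<le> i"
    using finite_anchors anchors_nonempty by auto
  have "Min anchors \<in> primary"
    using first(1)
  proof (cases rule: anchors_cases)
    case 2
    then show ?thesis using less \<open>1 \<le> j\<close> by simp
  next
    case 3
    then show ?thesis using Min_anchors path_long by simp
  qed
  moreover have "\<not> (0 < d \<and> d < Min anchors)" if "d \<in> primary" for d
    using first(2) primary_subset_anchors that by fastforce
  ultimately have "primary_gap 0 (Min anchors)"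
    unfolding primary_gap_def using less by auto
  moreover have "0 \<notin> primary"
    using primary_subset visited_subset by auto
  ultimately show False
    using witnesses_in_gap[of 0 "Min anchors"] j less \<open>1 \<le> j\<close> Min_anchors by fastforce
qed

lemma witness_le_Max_anchors:
  assumes j: "j \<in> witnesses"
  shows "j \<le> Max anchors"
proof (rule ccontr)
  assume "\<not> j \<le> Max anchors"
  then have less: "Max anchors < j" by simp
  have "j \<le> n"
    using j witnesses_range by auto
  have last: "Max anchors \<in> anchors" "\<And>i. i \<in> anchors \<Longrightarrow> i \<le> Max anchors"
    using finite_anchors anchors_nonempty by auto
  have "Max anchors \<in> primary"
    using last(1)
  proof (cases rule: anchors_cases)
    case 2
    then show ?thesis using Max_anchors path_long by simp
  next
    case 3
    then show ?thesis using less \<open>j \<le> n\<close> by simp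
  qed
  moreover have "\<not> (Max anchors < d \<and> d < n + 1)" if "d \<in> primary" for d
    using last(2) primary_subset_anchors that by fastforce
  ultimately have "primary_gap (Max anchors) (n + 1)"
    unfolding primary_gap_def using less \<open>j \<le> n\<close> by auto
  moreover have "n + 1 \<notin> primary"
    using primary_subset visited_subset by auto
  ultimately show False
    using witnesses_in_gap[of "Max anchors" "n + 1"] j less \<open>j \<le> n\<close> Max_anchors by fastforce
qed

lemma inj_on_witness: "inj_on w (T - primary)"
proof (rule inj_onI, rule ccontr)
  fix t1 t2
  assume t: "t1 \<in> T - primary" "t2 \<in> T - primary" "w t1 = w t2" "t1 \<noteq> t2"
  show False
  proof (rule ft_less_cases[of t1 t2])
    assume "ft t1 < ft t2"
    then show False
      using witness_nonprimary(2)[OF t(1)] witness_nonprimary(3)[OF t(2), of t1] t by auto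
  next
    assume "ft t2 < ft t1"
    then show False
      using witness_nonprimary(2)[OF t(2)] witness_nonprimary(3)[OF t(1), of t2] t by auto
  qed (use t in auto)
qed

lemma card_primary_witnesses_le:
  "card primary + card witnesses + m * (card anchors - 1) \<le> Max anchors + 1 - Min anchors"
proof -
  have "primary \<union> witnesses \<subseteq> {Min anchors..Max anchors}"
    using primary_subset_anchors finite_anchors Min_anchors_le_witness witness_le_Max_anchors
    by fastforce
  from card_le_gaps[OF finite_anchors anchors_nonempty this anchors_gap_card]
  have bound: "card (primary \<union> witnesses) + m * (card anchors - 1) \<le> Max anchors + 1 - Min anchors" .
  have "finite witnesses"
    using finite_subset[OF witnesses_range] by simp
  moreover have "primary \<inter> witnesses = {}"
    unfolding witnesses_def by auto
  ultimately have "card (primary \<union> witnesses) = card primary + card witnesses"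
    using finite_primary by (simp add: card_Un_disjoint)
  with bound show ?thesis
    by simp
qed

end

section \<open>The X-join of a power of a path\<close>

locale xjoin_path_power =
  fixes n m :: nat and R :: "nat \<Rightarrow> 'a graph"
  assumes m_pos: "1 \<le> m" and path_long: "m + 2 \<le> n"
    and finite_blocks: "\<And>i. i \<in> {1..n} \<Longrightarrow> finite_graph (R i)"
    and disjoint_blocks: "\<And>i j. i \<in> {1..n} \<Longrightarrow> j \<in> {1..n} \<Longrightarrow> i \<noteq> j \<Longrightarrow>
                           verts (R i) \<inter> verts (R j) = {}"
begin

definition H :: "'a graph" where
  "H = xjoin (path_power n m) R"

abbreviation block :: "nat \<Rightarrow> 'a set" where
  "block i \<equiv> verts (R i)"

definition block_of :: "'a \<Rightarrow> nat" where
  "block_of x = (THE i. i \<in> {1..n} \<and> x \<in> block i)"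

lemma verts_H: "verts H = (\<Union>i\<in>{1..n}. block i)"
  unfolding H_def xjoin_def path_power_def by simp

lemma finite_block: "i \<in> {1..n} \<Longrightarrow> finite (block i)"
  using finite_blocks unfolding finite_graph_def by blast

lemma block_nonempty: "i \<in> {1..n} \<Longrightarrow> block i \<noteq> {}"
  using finite_blocks unfolding finite_graph_def by blast

lemma finite_verts_H: "finite (verts H)"
  unfolding verts_H using finite_block by simp

lemma block_unique: "i \<in> {1..n} \<Longrightarrow> j \<in> {1..n} \<Longrightarrow> x \<in> block i \<Longrightarrow> x \<in> block j \<Longrightarrow> i = j"
  using disjoint_blocks by blast

lemma block_of_eq: "i \<in> {1..n} \<Longrightarrow> x \<in> block i \<Longrightarrow> block_of x = i"
  unfolding block_of_def using block_unique by blast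

lemma block_of_in: "x \<in> verts H \<Longrightarrow> block_of x \<in> {1..n} \<and> x \<in> block (block_of x)"
  unfolding verts_H using block_of_eq by auto

lemma adj_block:
  assumes "i \<in> {1..n}" "adj (R i) y z"
  shows "y \<in> block i" "z \<in> block i"
  using finite_blocks[OF assms(1)] assms(2) unfolding finite_graph_def wf_graph_def by auto

lemma cnbhd_block_subset: "i \<in> {1..n} \<Longrightarrow> x \<in> block i \<Longrightarrow> cnbhd (R i) x \<subseteq> block i"
  unfolding cnbhd_def by auto

lemma adj_H_iff:
  assumes i: "i \<in> {1..n}" and x: "x \<in> block i"
  shows "adj H x u \<longleftrightarrow> adj (R i) x u \<or> (\<exists>j\<in>{1..n}. pp_adj m i j \<and> u \<in> block j)"
proof -
  have "verts (path_power n m) = {1..n}"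
    by (simp add: path_power_def)
  then have adj_H: "adj H x u \<longleftrightarrow> (\<exists>i'\<in>{1..n}. adj (R i') x u) \<or>
      (\<exists>i' j. adj (path_power n m) i' j \<and> x \<in> block i' \<and> u \<in> block j)"
    unfolding H_def xjoin_def by simp
  have inner: "(\<exists>i'\<in>{1..n}. adj (R i') x u) \<longleftrightarrow> adj (R i) x u"
  proof
    assume "\<exists>i'\<in>{1..n}. adj (R i') x u"
    then obtain i' where i': "i' \<in> {1..n}" "adj (R i') x u"
      by blast
    with block_unique[OF i' (1) i adj_block(1)[OF i'] x] show "adj (R i) x u"
      by simp
  qed (use i in blast)
  have outer: "(\<exists>i' j. adj (path_power n m) i' j \<and> x \<in> block i' \<and> u \<in> block j) \<longleftrightarrow>
      (\<exists>j\<in>{1..n}. pp_adj m i j \<and> u \<in> block j)"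
  proof
    assume "\<exists>i' j. adj (path_power n m) i' j \<and> x \<in> block i' \<and> u \<in> block j"
    then obtain i' j where "i' \<in> {1..n}" "j \<in> {1..n}" "pp_adj m i' j" "x \<in> block i'" "u \<in> block j"
      unfolding path_power_def pp_adj_def by auto
    with block_unique[OF i _ x] show "\<exists>j\<in>{1..n}. pp_adj m i j \<and> u \<in> block j"
      by auto
  next
    assume "\<exists>j\<in>{1..n}. pp_adj m i j \<and> u \<in> block j"
    then obtain j where "j \<in> {1..n}" "pp_adj m i j" "u \<in> block j"
      by blast
    with i x show "\<exists>i' j. adj (path_power n m) i' j \<and> x \<in> block i' \<and> u \<in> block j"
      unfolding path_power_def pp_adj_def by auto
  qed
  show ?thesis
    unfolding adj_H inner outer ..
qed

lemma cnbhd_H: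
  assumes i: "i \<in> {1..n}" and x: "x \<in> block i"
  shows "cnbhd H x = cnbhd (R i) x \<union> (\<Union>j\<in>{j\<in>{1..n}. pp_adj m i j}. block j)"
  using i adj_block(2)[OF i] unfolding cnbhd_def adj_H_iff[OF i x] verts_H by auto

lemma cnbhd_block_subset_cnbhd_H: "i \<in> {1..n} \<Longrightarrow> x \<in> block i \<Longrightarrow> cnbhd (R i) x \<subseteq> cnbhd H x"
  using cnbhd_H by blast

lemma block_subset_cnbhd_H:
  "i \<in> {1..n} \<Longrightarrow> x \<in> block i \<Longrightarrow> j \<in> {1..n} \<Longrightarrow> pp_adj m i j \<Longrightarrow> block j \<subseteq> cnbhd H x"
  using cnbhd_H by blast

lemma pp_adj_blocks_inter:
  assumes "j \<in> {1..n}" "\<not> pp_adj m i j"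
  shows "(\<Union>j'\<in>{j'\<in>{1..n}. pp_adj m i j'}. block j') \<inter> block j = {}"
  using disjoint_blocks assms by blast

lemma cnbhd_H_inter_own_block:
  assumes "i \<in> {1..n}" "x \<in> block i"
  shows "cnbhd H x \<inter> block i = cnbhd (R i) x"
proof -
  have "\<not> pp_adj m i i"
    unfolding pp_adj_def by simp
  then show ?thesis
    unfolding cnbhd_H[OF assms]
    using pp_adj_blocks_inter[OF assms(1)] cnbhd_block_subset[OF assms] by blast
qed

lemma cnbhd_H_inter_far_block:
  assumes "i \<in> {1..n}" "x \<in> block i" "j \<in> {1..n}" "j \<noteq> i" "\<not> pp_adj m i j"
  shows "cnbhd H x \<inter> block j = {}"
  unfolding cnbhd_H[OF assms(1,2)]
  using pp_adj_blocks_inter[OF assms(3,5)] cnbhd_block_subset[OF assms(1,2)]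
    disjoint_blocks[OF assms(1,3)] assms(4) by blast

end

section \<open>Legal sequences of the X-join are short\<close>

lemma sum_length_filter:
  assumes "finite X" and "f ` set xs \<subseteq> X"
  shows "(\<Sum>t\<in>X. length (filter (\<lambda>x. f x = t) xs)) = length xs"
proof -
  have "count_list (map f xs) t = length (filter (\<lambda>x. f x = t) xs)" for t
    by (induction xs) auto
  then show ?thesis
    using sum_count_set[of "map f xs" X] assms by simp
qed

locale xjoin_legal_seq = xjoin_path_power +
  fixes s :: "'a list"
  assumes legal: "legal_seq H s"
begin

definition visited :: "nat set" where
  "visited = block_of ` set s"

definition first_visit :: "nat \<Rightarrow> nat" where
  "first_visit t = (LEAST i. i < length s \<and> block_of (s ! i) = t)"

definition before :: "nat \<Rightarrow> 'a set" where
  "before i = dominated H (take i s)"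

definition witness_block :: "nat \<Rightarrow> nat" where
  "witness_block t = (SOME b. b \<in> {1..n} \<and> pp_adj m t b \<and>
     block b \<inter> (cnbhd H (s ! first_visit t) - before (first_visit t)) \<noteq> {})"

definition visits :: "nat \<Rightarrow> 'a list" where
  "visits t = filter (\<lambda>v. block_of v = t) s"

lemma block_of_nth: "i < length s \<Longrightarrow> block_of (s ! i) \<in> {1..n} \<and> s ! i \<in> block (block_of (s ! i))"
  using legal block_of_in unfolding legal_seq_def by (meson nth_mem subsetD)

lemma visited_subset: "visited \<subseteq> {1..n}"
  unfolding visited_def using block_of_nth by (auto simp: in_set_conv_nth)

lemma visitedD:
  assumes "t \<in> visited"
  shows "first_visit t < length s" "block_of (s ! first_visit t) = t"
proof -
  have "\<exists>i. i < length s \<and> block_of (s ! i) = t"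
    using assms unfolding visited_def by (auto simp: in_set_conv_nth)
  then have "first_visit t < length s \<and> block_of (s ! first_visit t) = t"
    unfolding first_visit_def by (rule LeastI_ex)
  then show "first_visit t < length s" "block_of (s ! first_visit t) = t"
    by auto
qed

lemma first_visit_le: "i < length s \<Longrightarrow> block_of (s ! i) = t \<Longrightarrow> first_visit t \<le> i"
  unfolding first_visit_def by (simp add: Least_le)

lemma inj_on_first_visit: "inj_on first_visit visited"
  by (rule inj_onI) (metis visitedD(2))

lemma cnbhd_subset_before: "j < i \<Longrightarrow> i \<le> length s \<Longrightarrow> cnbhd H (s ! j) \<subseteq> before i"
  unfolding before_def by (auto simp: in_set_conv_nth intro!: exI[of _ j])

lemma footprint_nonempty: "i < length s \<Longrightarrow> cnbhd H (s ! i) - before i \<noteq> {}"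
  using legal unfolding legal_seq_def before_def by blast

lemma neighbour_blocks_dominated:
  assumes "t \<in> visited" "first_visit t < i" "i \<le> length s" "j \<in> {1..n}" "pp_adj m t j"
  shows "block j \<subseteq> before i"
proof -
  have "block j \<subseteq> cnbhd H (s ! first_visit t)"
    using block_subset_cnbhd_H block_of_nth visitedD assms by metis
  then show ?thesis
    using cnbhd_subset_before[OF assms(2,3)] by blast
qed

lemma revisit_footprint_in_own_block:
  assumes "i < length s" "block_of (s ! i) = t" "first_visit t < i"
  shows "cnbhd (R t) (s ! i) - before i \<noteq> {}"
proof -
  have t: "t \<in> {1..n}" "s ! i \<in> block t" "t \<in> visited"
    using block_of_nth[OF assms(1)] assms(1,2) unfolding visited_def by auto
  have "(\<Union>j\<in>{j\<in>{1..n}. pp_adj m t j}. block j) \<subseteq> before i"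
    using neighbour_blocks_dominated[OF t(3) assms(3)] assms(1) by auto
  then show ?thesis
    using footprint_nonempty[OF assms(1)] cnbhd_H[OF t(1,2)] by blast
qed

lemma block_dominated_after_earlier_neighbour:
  assumes "t \<in> visited" "t' \<in> visited" "first_visit t' < first_visit t" "pp_adj m t' t"
    and "first_visit t \<le> i" "i \<le> length s"
  shows "block t \<subseteq> before i"
proof -
  have "t \<in> {1..n}" "first_visit t' < i"
    using assms(1,3,5) visited_subset by auto
  then show ?thesis
    using neighbour_blocks_dominated[OF assms(2) _ assms(6) _ assms(4)] by blast
qed

lemma visited_once_after_earlier_neighbour:
  assumes "t \<in> visited" "t' \<in> visited" "first_visit t' < first_visit t" "pp_adj m t' t"
    and "i < length s" "block_of (s ! i) = t"
  shows "i = first_visit t"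
proof (rule ccontr)
  assume "i \<noteq> first_visit t"
  with first_visit_le[OF assms(5,6)] have later: "first_visit t < i"
    by simp
  have "s ! i \<in> block t" "t \<in> {1..n}"
    using block_of_nth[OF assms(5)] assms(6) by auto
  then have "cnbhd (R t) (s ! i) \<subseteq> block t"
    by (rule cnbhd_block_subset[rotated])
  also have "\<dots> \<subseteq> before i"
    using block_dominated_after_earlier_neighbour[OF assms(1-4)] later assms(5) by simp
  finally show False
    using revisit_footprint_in_own_block[OF assms(5,6) later] by blast
qed

lemma witness_block_spec:
  assumes t: "t \<in> visited" and "\<exists>t'\<in>visited. first_visit t' < first_visit t \<and> pp_adj m t' t"
  shows "witness_block t \<in> {1..n}" "pp_adj m t (witness_block t)"
    "block (witness_block t) \<inter> (cnbhd H (s ! first_visit t) - before (first_visit t)) \<noteq> {}"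
proof -
  define i where "i = first_visit t"
  have i: "i < length s" "s ! i \<in> block t" "t \<in> {1..n}"
    using visitedD[OF t] block_of_nth unfolding i_def by metis+
  have "block t \<subseteq> before i"
    using assms block_dominated_after_earlier_neighbour i(1) unfolding i_def by fastforce
  moreover obtain u where u: "u \<in> cnbhd H (s ! i)" "u \<notin> before i"
    using footprint_nonempty[OF i(1)] by blast
  ultimately have "u \<notin> cnbhd (R t) (s ! i)"
    using cnbhd_block_subset[OF i(3,2)] by blast
  then have "\<exists>b. b \<in> {1..n} \<and> pp_adj m t b \<and> block b \<inter> (cnbhd H (s ! i) - before i) \<noteq> {}"
    using u cnbhd_H[OF i(3,2)] by blast
  then have "witness_block t \<in> {1..n} \<and> pp_adj m t (witness_block t) \<and>
      block (witness_block t) \<inter> (cnbhd H (s ! i) - before i) \<noteq> {}"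
    unfolding witness_block_def i_def by (rule someI_ex)
  then show "witness_block t \<in> {1..n}" "pp_adj m t (witness_block t)"
    "block (witness_block t) \<inter> (cnbhd H (s ! first_visit t) - before (first_visit t)) \<noteq> {}"
    unfolding i_def by auto
qed

lemma witness_block_fresh:
  assumes t: "t \<in> visited" and earlier: "\<exists>t'\<in>visited. first_visit t' < first_visit t \<and> pp_adj m t' t"
    and t': "t' \<in> visited" "first_visit t' < first_visit t"
  shows "\<not> pp_adj m t' (witness_block t)"
proof
  assume "pp_adj m t' (witness_block t)"
  then have "block (witness_block t) \<subseteq> before (first_visit t)"
    using neighbour_blocks_dominated[OF t'] witness_block_spec(1)[OF t earlier]
      visitedD(1)[OF t] by simp
  then show False
    using witness_block_spec(3)[OF t earlier] by blast
qed

sublocale visit_pattern n m visited first_visit witness_block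
proof
  show "visited \<subseteq> {1..n}" "inj_on first_visit visited" "m + 2 \<le> n"
    by (fact visited_subset inj_on_first_visit path_long)+
  show "witness_block t \<in> {1..n} \<and> pp_adj m t (witness_block t) \<and>
      (\<forall>t'\<in>visited. first_visit t' < first_visit t \<longrightarrow> \<not> pp_adj m t' (witness_block t))"
    if "t \<in> visited" "\<exists>t'\<in>visited. first_visit t' < first_visit t \<and> pp_adj m t' t" for t
    using witness_block_spec[OF that] witness_block_fresh[OF that] by blast
qed

lemma set_visits: "t \<in> {1..n} \<Longrightarrow> set (visits t) \<subseteq> block t"
  unfolding visits_def using legal block_of_in unfolding legal_seq_def by auto

lemma own_dominated_subset_before:
  assumes "t \<in> {1..n}"
  shows "dominated (R t) (filter (\<lambda>v. block_of v = t) (take i s)) \<subseteq> before i"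
proof
  fix u assume "u \<in> dominated (R t) (filter (\<lambda>v. block_of v = t) (take i s))"
  then obtain v where v: "v \<in> set (take i s)" "block_of v = t" "u \<in> cnbhd (R t) v"
    by auto
  have "v \<in> block t"
    using v(1,2) set_visits[OF assms] in_set_takeD unfolding visits_def by fastforce
  then have "u \<in> cnbhd H v"
    using cnbhd_block_subset_cnbhd_H[OF assms] v(3) by blast
  with v(1) show "u \<in> before i"
    unfolding before_def by blast
qed

lemma visits_legal:
  assumes t: "t \<in> {1..n}"
  shows "legal_seq (R t) (visits t)"
  unfolding visits_def
proof (rule legal_seq_filter)
  show "set (filter (\<lambda>v. block_of v = t) s) \<subseteq> verts (R t)"
    using set_visits[OF t] unfolding visits_def .
  fix i assume i: "i < length s" "block_of (s ! i) = t"
  show "cnbhd (R t) (s ! i) - dominated (R t) (filter (\<lambda>v. block_of v = t) (take i s)) \<noteq> {}"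
  proof (cases "first_visit t < i")
    case True
    then show ?thesis
      using revisit_footprint_in_own_block[OF i True] own_dominated_subset_before[OF t] by blast
  next
    case False
    have "block_of v \<noteq> t" if v: "v \<in> set (take i s)" for v
    proof -
      obtain j where "j < i" "j < length s" "v = s ! j"
        using v by (auto simp: in_set_conv_nth)
      with False show ?thesis
        using first_visit_le[of j t] by auto
    qed
    then have "filter (\<lambda>v. block_of v = t) (take i s) = []"
      by (simp add: filter_empty_conv)
    then show ?thesis
      using self_in_cnbhd[of "s ! i" "R t"] by auto
  qed
qed

lemma length_visits_le_gamma_gr: "t \<in> {1..n} \<Longrightarrow> length (visits t) \<le> gamma_gr (R t)"
  using legal_seq_length_le_gamma_gr(1)[OF finite_block visits_legal] .

lemma length_visits_nonprimary:
  assumes t: "t \<in> visited - primary"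
  shows "length (visits t) = 1"
proof -
  obtain t' where t': "t' \<in> visited" "first_visit t' < first_visit t" "pp_adj m t' t"
    using t unfolding primary_def by auto
  have "t \<in> visited"
    using t by simp
  have "{i. i < length s \<and> block_of (s ! i) = t} = {first_visit t}"
  proof (intro equalityI subsetI)
    fix i assume "i \<in> {i. i < length s \<and> block_of (s ! i) = t}"
    then show "i \<in> {first_visit t}"
      using visited_once_after_earlier_neighbour[OF \<open>t \<in> visited\<close> t'] by simp
  next
    fix i assume "i \<in> {first_visit t}"
    then show "i \<in> {i. i < length s \<and> block_of (s ! i) = t}"
      using visitedD[OF \<open>t \<in> visited\<close>] by simp
  qed
  then show ?thesis
    unfolding visits_def length_filter_conv_card by simp
qed

lemma visits_before_witness_time:
  assumes t: "t \<in> primary" and t0: "t0 \<in> visited - primary" "witness_block t0 = t"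
    and i: "i < length s" "block_of (s ! i) = t"
  shows "i < first_visit t0"
proof (rule ccontr)
  assume "\<not> i < first_visit t0"
  have "t \<in> visited" "t0 \<in> visited"
    using t t0 primary_subset by auto
  have adj: "pp_adj m t0 t"
    using witness_nonprimary(2)[OF t0(1)] t0(2) by simp
  then have "t \<noteq> t0" "pp_adj m t t0"
    unfolding pp_adj_def by auto
  then have "\<not> first_visit t0 < first_visit t"
    using t \<open>t0 \<in> visited\<close> adj unfolding primary_def by blast
  moreover have "first_visit t \<noteq> first_visit t0"
    using inj_on_first_visit \<open>t \<in> visited\<close> \<open>t0 \<in> visited\<close> \<open>t \<noteq> t0\<close> by (meson inj_on_contraD)
  moreover have "i \<noteq> first_visit t0"
    using visitedD(2)[OF \<open>t0 \<in> visited\<close>] i(2) \<open>t \<noteq> t0\<close> by auto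
  ultimately have order: "first_visit t < first_visit t0" "first_visit t0 < i"
    using \<open>\<not> i < first_visit t0\<close> by auto
  have "t \<in> {1..n}" "s ! i \<in> block t"
    using block_of_nth[OF i(1)] i(2) by auto
  then have "cnbhd (R t) (s ! i) \<subseteq> block t"
    by (rule cnbhd_block_subset)
  also have "\<dots> \<subseteq> before i"
    using neighbour_blocks_dominated[OF \<open>t0 \<in> visited\<close> order(2)] i(1) \<open>t \<in> {1..n}\<close> adj by simp
  finally show False
    using revisit_footprint_in_own_block[OF i] order by auto
qed

lemma length_visits_less_gamma_gr:
  assumes t: "t \<in> primary" "t \<in> witness_block ` (visited - primary)"
  shows "length (visits t) < gamma_gr (R t)"
proof -
  obtain t0 where t0: "t0 \<in> visited - primary" "witness_block t0 = t"
    using t(2) by auto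
  then have "\<exists>t'\<in>visited. first_visit t' < first_visit t0 \<and> pp_adj m t' t0"
    unfolding primary_def by auto
  then obtain u where u: "u \<in> block t" "u \<notin> before (first_visit t0)"
    using witness_block_spec(3)[of t0] t0 by blast
  have tn: "t \<in> {1..n}"
    using t(1) primary_subset visited_subset by auto
  have "u \<notin> cnbhd (R t) v" if v: "v \<in> set (visits t)" for v
  proof -
    obtain i where i: "i < length s" "v = s ! i" "block_of (s ! i) = t"
      using v unfolding visits_def by (auto simp: in_set_conv_nth)
    then have "cnbhd (R t) v \<subseteq> cnbhd H v"
      using block_of_nth[OF i(1)] cnbhd_block_subset_cnbhd_H by auto
    also have "\<dots> \<subseteq> before (first_visit t0)"
    proof -
      have "i < first_visit t0" "first_visit t0 \<le> length s"
        using visits_before_witness_time[OF t(1) t0 i(1,3)] visitedD(1)[of t0] t0(1) by auto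
      then show ?thesis
        using cnbhd_subset_before i(2) by blast
    qed
    finally show ?thesis
      using u(2) by blast
  qed
  with u(1) have "dominated (R t) (visits t) \<noteq> block t"
    by blast
  then show ?thesis
    using legal_seq_length_le_gamma_gr(2)[OF finite_block visits_legal] tn by blast
qed

lemma length_le_primary_gamma_gr:
  "length s \<le> (\<Sum>t\<in>primary. gamma_gr (R t)) + card witnesses"
proof -
  \<comment> \<open>Non-primary blocks are visited once each and are counted injectively by their witness
    blocks; a witness block that is primary pays for itself by a visit less.\<close>
  define c where "c t = length (visits t)" for t
  define X where "X = witness_block ` (visited - primary)"
  have fin: "finite visited" "finite X"
    using finite_visited unfolding X_def by simp_all
  have "length s = (\<Sum>t\<in>visited. c t)"
    unfolding c_def visits_def using sum_length_filter[of visited block_of s] fin(1)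
    by (simp add: visited_def)
  also have "\<dots> = (\<Sum>t\<in>primary. c t) + (\<Sum>t\<in>visited - primary. c t)"
    using sum.subset_diff[OF primary_subset fin(1), of c] by linarith
  also have "(\<Sum>t\<in>visited - primary. c t) = card X"
    using length_visits_nonprimary card_image[OF inj_on_witness] unfolding c_def X_def by simp
  also have "card X = card (primary \<inter> X) + card witnesses"
    using card_Int_Diff[OF fin(2), of primary] unfolding witnesses_def X_def[symmetric]
    by (simp add: inf_commute)
  finally have total: "length s = (\<Sum>t\<in>primary. c t) + card (primary \<inter> X) + card witnesses"
    by simp
  have "(\<Sum>t\<in>primary \<inter> X. c t) + card (primary \<inter> X) = (\<Sum>t\<in>primary \<inter> X. c t + 1)"
    by (simp only: sum.distrib card_eq_sum)
  also have "\<dots> \<le> (\<Sum>t\<in>primary \<inter> X. gamma_gr (R t))"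
    using length_visits_less_gamma_gr unfolding c_def X_def by (intro sum_mono) (simp add: Suc_le_eq)
  finally have "(\<Sum>t\<in>primary \<inter> X. c t) + card (primary \<inter> X) \<le> (\<Sum>t\<in>primary \<inter> X. gamma_gr (R t))" .
  moreover have "(\<Sum>t\<in>primary - X. c t) \<le> (\<Sum>t\<in>primary - X. gamma_gr (R t))"
    using length_visits_le_gamma_gr primary_subset visited_subset unfolding c_def
    by (intro sum_mono) auto
  ultimately have "(\<Sum>t\<in>primary. c t) + card (primary \<inter> X) \<le> (\<Sum>t\<in>primary. gamma_gr (R t))"
    using sum.Int_Diff[OF finite_primary, of c X] sum.Int_Diff[OF finite_primary, of "\<lambda>t. gamma_gr (R t)" X]
    by linarith
  with total show ?thesis
    by linarith
qed

lemma length_le_obj_anchors: "int (length s) \<le> obj m R anchors + int m + 1"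
proof -
  define g where "g t = int (gamma_gr (R t))" for t
  have pos: "g t - 1 \<ge> 0" if "t \<in> anchors" for t
    using gamma_gr_pos[OF finite_block block_nonempty] anchors_subset that unfolding g_def by force
  have "(\<Sum>t\<in>primary. g t - 1) \<le> (\<Sum>t\<in>anchors. g t - 1)"
    using pos by (intro sum_mono2[OF finite_anchors primary_subset_anchors]) blast
  moreover have "(\<Sum>t\<in>primary. g t) = (\<Sum>t\<in>primary. g t - 1) + int (card primary)"
    by (simp add: sum_subtractf)
  moreover have "int (length s) \<le> (\<Sum>t\<in>primary. g t) + int (card witnesses)"
    using length_le_primary_gamma_gr unfolding g_def by (simp flip: of_nat_sum)
  moreover have "card anchors \<ge> 1" "Min anchors \<le> Max anchors"
    using finite_anchors anchors_nonempty by (simp_all add: Suc_le_eq card_gt_0_iff)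
  then have "int (m * (card anchors - 1)) = int m * (int (card anchors) - 1)"
    and "int (Max anchors + 1 - Min anchors) = int (Max anchors) + 1 - int (Min anchors)"
    by (simp_all add: of_nat_diff)
  then have "int (card primary) + int (card witnesses) + int m * (int (card anchors) - 1)
      \<le> int (Max anchors) + 1 - int (Min anchors)"
    using card_primary_witnesses_le by linarith
  ultimately show ?thesis
    unfolding obj_def g_def by (simp add: algebra_simps)
qed

end

section \<open>The sequence \<open>S_P(I)\<close>\<close>

lemma set_SP_list:
  assumes "sorted_wrt (\<lambda>a b. a + m < b) L" and "L \<noteq> []"
  shows "set (SP_list m L) = {q. hd L \<le> q \<and> q \<le> last L \<and> (\<forall>i\<in>set L. q < i \<longrightarrow> q + m < i)}"
  using assms
proof (induction m L rule: SP_list.induct)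
  case (3 m x y xs)
  have gaps: "x + m < y" "\<forall>i\<in>set xs. y + m < i"
    using "3.prems"(1) by auto
  have "last (y # xs) \<ge> y"
    using gaps(2) by (cases xs rule: rev_cases) auto
  with gaps have "set (SP_list m (x # y # xs)) =
      {x..<y - m} \<union> {q. y \<le> q \<and> q \<le> last (y # xs) \<and> (\<forall>i\<in>set (y # xs). q < i \<longrightarrow> q + m < i)}"
    using "3.IH" "3.prems"(1) by simp
  also have "\<dots> = {q. x \<le> q \<and> q \<le> last (x # y # xs) \<and> (\<forall>i\<in>set (x # y # xs). q < i \<longrightarrow> q + m < i)}"
    using gaps \<open>last (y # xs) \<ge> y\<close> by (auto simp: less_diff_conv)
  finally show ?case
    by simp
qed auto

lemma sorted_SP_list:
  assumes "sorted_wrt (\<lambda>a b. a + m < b) L"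
  shows "sorted_wrt (<) (SP_list m L)"
  using assms
proof (induction m L rule: SP_list.induct)
  case (3 m x y xs)
  have "y \<le> q" if "q \<in> set (SP_list m (y # xs))" for q
    using that set_SP_list[of m "y # xs"] "3.prems" by simp
  then show ?case
    using "3.IH" "3.prems" by (fastforce simp: sorted_wrt_append)
qed auto

lemma length_SP_list:
  assumes "sorted_wrt (\<lambda>a b. a + m < b) L" and "L \<noteq> []"
  shows "length (SP_list m L) + m * (length L - 1) = last L + 1 - hd L"
  using assms
proof (induction m L rule: SP_list.induct)
  case (3 m x y xs)
  have "x + m < y" "\<forall>i\<in>set xs. y + m < i"
    using "3.prems"(1) by auto
  moreover have "y \<le> last (y # xs)"
    using \<open>\<forall>i\<in>set xs. y + m < i\<close> by (cases xs rule: rev_cases) auto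
  moreover have "length (SP_list m (y # xs)) + m * length xs = last (y # xs) + 1 - y"
    using "3.IH" "3.prems"(1) by simp
  ultimately show ?case
    by simp
qed auto

lemma hd_sorted_list_of_set: "finite A \<Longrightarrow> A \<noteq> {} \<Longrightarrow> hd (sorted_list_of_set A) = Min A"
  by (simp add: sorted_list_of_set_nonempty)

lemma sorted_le_last: "sorted xs \<Longrightarrow> z \<in> set xs \<Longrightarrow> z \<le> last xs"
  by (induction xs) (auto simp: sorted_wrt_append)

lemma last_sorted_list_of_set:
  assumes "finite A" "A \<noteq> {}"
  shows "last (sorted_list_of_set A) = Max A"
proof (rule Max_eqI[symmetric])
  show "last (sorted_list_of_set A) \<in> A"
    using assms last_in_set[of "sorted_list_of_set A"] by simp
  show "a \<le> last (sorted_list_of_set A)" if "a \<in> A" for a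
    using that assms sorted_le_last[OF sorted_sorted_list_of_set, of a A] by simp
qed (use assms in simp)

lemma tildeI_D:
  assumes "I \<in> tildeI n m"
  shows "finite I" "I \<noteq> {}" "I \<subseteq> {1..n}" "Min I \<le> m + 1" "n - m \<le> Max I"
    and "\<And>i j. i \<in> I \<Longrightarrow> j \<in> I \<Longrightarrow> i < j \<Longrightarrow> i + m < j"
proof -
  show "I \<subseteq> {1..n}" "I \<noteq> {}" "Min I \<le> m + 1" "n - m \<le> Max I"
    using assms unfolding tildeI_def indep_pp_def by auto
  then show "finite I"
    using finite_subset[of I "{1..n}"] by simp
  show "i + m < j" if "i \<in> I" "j \<in> I" "i < j" for i j
  proof -
    have "\<not> (i \<le> j + m \<and> j \<le> i + m)"
      using assms that less_imp_neq unfolding tildeI_def indep_pp_def by blast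
    with \<open>i < j\<close> show ?thesis
      by linarith
  qed
qed

lemma spread_sorted_list_of_set:
  assumes "I \<in> tildeI n m"
  shows "sorted_wrt (\<lambda>a b. a + m < b) (sorted_list_of_set I)"
  using sorted_wrt_mono_rel[OF _ strict_sorted_list_of_set[of I]] tildeI_D[OF assms] by simp

lemma set_SP:
  assumes "I \<in> tildeI n m"
  shows "set (SP m I) = {q. Min I \<le> q \<and> q \<le> Max I \<and> (\<forall>i\<in>I. q < i \<longrightarrow> q + m < i)}"
  using set_SP_list[OF spread_sorted_list_of_set[OF assms]] tildeI_D[OF assms]
  by (simp add: SP_def hd_sorted_list_of_set last_sorted_list_of_set)

lemma sorted_SP: "I \<in> tildeI n m \<Longrightarrow> sorted_wrt (<) (SP m I)"
  unfolding SP_def by (rule sorted_SP_list[OF spread_sorted_list_of_set])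

lemma length_SP:
  assumes "I \<in> tildeI n m"
  shows "length (SP m I) + m * (card I - 1) = Max I + 1 - Min I"
  using length_SP_list[OF spread_sorted_list_of_set[OF assms]] tildeI_D[OF assms]
  by (simp add: SP_def hd_sorted_list_of_set last_sorted_list_of_set)

lemma subset_SP: "I \<in> tildeI n m \<Longrightarrow> I \<subseteq> set (SP m I)"
  using set_SP tildeI_D by fastforce

lemma pred_in_SP:
  assumes I: "I \<in> tildeI n m" and b: "Min I < b" "b \<le> Max I" "b \<notin> I"
    and far: "\<forall>i\<in>I. b < i \<longrightarrow> b + m < i"
  shows "b - 1 \<in> set (SP m I)"
proof -
  have "b - 1 + m < i" if "i \<in> I" "b - 1 < i" for i
  proof -
    have "i \<noteq> b"
      using that(1) b(3) by blast
    with that(2) have "b < i"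
      by linarith
    with far that(1) show ?thesis
      by auto
  qed
  with b show ?thesis
    unfolding set_SP[OF I] by auto
qed

lemma SP_adj_nonmember:
  assumes I: "I \<in> tildeI n m" and "1 \<le> m" and b: "b \<in> {1..n}" "b \<notin> I"
  shows "\<exists>q\<in>set (SP m I). pp_adj m q b"
proof (cases "\<exists>i\<in>I. b < i \<and> i \<le> b + m")
  case True
  then obtain i where "i \<in> I" "b < i" "i \<le> b + m"
    by blast
  then show ?thesis
    using subset_SP[OF I] unfolding pp_adj_def by (intro bexI[of _ i]) auto
next
  case no_close: False
  note facts = tildeI_D[OF I]
  have "Min I \<in> I" "Max I \<in> I"
    using facts(1,2) by auto
  show ?thesis
  proof (cases "Max I < b")
    case True
    then show ?thesis
      using subset_SP[OF I] facts(5) b(1) \<open>Max I \<in> I\<close> unfolding pp_adj_def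
      by (intro bexI[of _ "Max I"]) auto
  next
    case False
    have "\<not> b < Min I"
      using no_close \<open>Min I \<in> I\<close> facts(4) b(1) by force
    moreover have "b \<noteq> Min I"
      using b(2) \<open>Min I \<in> I\<close> by auto
    ultimately have "Min I < b"
      by linarith
    moreover have "\<forall>i\<in>I. b < i \<longrightarrow> b + m < i"
      using no_close by (auto simp: not_le)
    ultimately have "b - 1 \<in> set (SP m I)"
      using pred_in_SP[OF I] False b(2) by simp
    then show ?thesis
      using \<open>1 \<le> m\<close> \<open>Min I < b\<close> unfolding pp_adj_def by (intro bexI[of _ "b - 1"]) auto
  qed
qed

lemma finite_tildeI: "finite (tildeI n m)"
proof (rule finite_subset)
  show "tildeI n m \<subseteq> Pow {1..n}"
    unfolding tildeI_def indep_pp_def by auto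
qed simp

context xjoin_path_power
begin

lemma cnbhd_H_inter_later_block:
  assumes "q \<in> {1..n}" "v \<in> block q" "j \<in> {1..n}" "q + m < j"
  shows "cnbhd H v \<inter> block j = {}"
  using cnbhd_H_inter_far_block[OF assms(1-3)] assms(4) unfolding pp_adj_def by auto

lemma legal_seq_append_block:
  assumes A: "legal_seq H A" and q: "q \<in> {1..n}"
    and far: "\<And>v. v \<in> set A \<Longrightarrow> cnbhd H v \<inter> block q = {}"
  shows "legal_seq (R q) S \<Longrightarrow> legal_seq H (A @ S)"
proof (induction S rule: rev_induct)
  case Nil
  with A show ?case by simp
next
  case (snoc x S)
  then have S: "legal_seq (R q) S" "x \<in> block q" "cnbhd (R q) x - dominated (R q) S \<noteq> {}"
    by (simp_all add: legal_seq_snoc)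
  then obtain u where u: "u \<in> cnbhd (R q) x" "u \<notin> dominated (R q) S"
    by blast
  have "u \<in> block q" "u \<in> cnbhd H x"
    using u(1) cnbhd_block_subset[OF q S(2)] cnbhd_block_subset_cnbhd_H[OF q S(2)] by auto
  moreover have "u \<notin> cnbhd H v" if "v \<in> set S" for v
  proof -
    have "v \<in> block q"
      using S(1) that unfolding legal_seq_def by auto
    then show ?thesis
      using cnbhd_H_inter_own_block[OF q] u(2) that \<open>u \<in> block q\<close> by blast
  qed
  moreover have "u \<notin> cnbhd H v" if "v \<in> set A" for v
    using far[OF that] \<open>u \<in> block q\<close> by blast
  ultimately have "cnbhd H x - dominated H (A @ S) \<noteq> {}"
    by auto
  moreover have "x \<in> verts H"
    using S(2) q unfolding verts_H by blast
  ultimately show ?case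
    using snoc.IH[OF S(1)] by (simp add: legal_seq_snoc flip: append_assoc)
qed

lemma legal_seq_snoc_far_block:
  assumes A: "legal_seq H A" and q: "q \<in> {1..n}" "q + m \<le> n" and x: "x \<in> block q"
    and far: "\<And>v. v \<in> set A \<Longrightarrow> cnbhd H v \<inter> block (q + m) = {}"
  shows "legal_seq H (A @ [x])"
proof -
  have qm: "q + m \<in> {1..n}"
    using q by simp
  obtain u where "u \<in> block (q + m)"
    using block_nonempty[OF qm] by blast
  moreover have "pp_adj m q (q + m)"
    using m_pos unfolding pp_adj_def by simp
  ultimately have "u \<in> cnbhd H x - dominated H A"
    using block_subset_cnbhd_H[OF q(1) x qm] far by blast
  moreover have "x \<in> verts H"
    using x q unfolding verts_H by blast
  ultimately show ?thesis
    using A by (auto simp: legal_seq_snoc)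
qed

lemma cnbhd_blocks_seq_inter_later_block:
  assumes S: "\<And>i. i \<in> {1..n} \<Longrightarrow> legal_seq (R i) (S i)" and f: "\<And>j. j \<in> {1..n} \<Longrightarrow> f j \<in> block j"
    and Q: "set Q \<subseteq> {1..n}" and v: "v \<in> set (concat (map (\<lambda>j. if j \<in> I then S j else [f j]) Q))"
    and j: "j \<in> {1..n}" "\<forall>q\<in>set Q. q + m < j"
  shows "cnbhd H v \<inter> block j = {}"
proof -
  obtain q where q: "q \<in> set Q" "v \<in> set (if q \<in> I then S q else [f q])"
    using v by auto
  have "q \<in> {1..n}"
    using q(1) Q by blast
  moreover from this have "v \<in> block q"
    using q(2) S f unfolding legal_seq_def by (auto split: if_splits)
  ultimately show ?thesis
    using cnbhd_H_inter_later_block j q(1) by blast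
qed

lemma legal_seq_blocks:
  assumes S: "\<And>i. i \<in> {1..n} \<Longrightarrow> legal_seq (R i) (S i)" and f: "\<And>j. j \<in> {1..n} \<Longrightarrow> f j \<in> block j"
  shows "sorted_wrt (<) Q \<Longrightarrow> set Q \<subseteq> {1..n} \<Longrightarrow>
     (\<forall>q\<in>set Q. q \<in> I \<longrightarrow> (\<forall>q'\<in>set Q. q' < q \<longrightarrow> q' + m < q)) \<Longrightarrow>
     (\<forall>q\<in>set Q. q \<notin> I \<longrightarrow> q + m \<le> n) \<Longrightarrow>
     legal_seq H (concat (map (\<lambda>j. if j \<in> I then S j else [f j]) Q))"
proof (induction Q rule: rev_induct)
  case Nil
  then show ?case by simp
next
  case (snoc q Q)
  define A where "A = concat (map (\<lambda>j. if j \<in> I then S j else [f j]) Q)"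
  have earlier: "\<forall>q'\<in>set Q. q' < q" and q: "q \<in> {1..n}" and Q: "set Q \<subseteq> {1..n}"
    using snoc.prems(1,2) by (auto simp: sorted_wrt_append)
  have A: "legal_seq H A"
    unfolding A_def using snoc.prems by (intro snoc.IH) (auto simp: sorted_wrt_append)
  have far: "cnbhd H v \<inter> block j = {}"
    if "v \<in> set A" "j \<in> {1..n}" "\<forall>q'\<in>set Q. q' + m < j" for v j
    using cnbhd_blocks_seq_inter_later_block[of S f Q v I j] S f Q that unfolding A_def by blast
  show ?case
  proof (cases "q \<in> I")
    case True
    then have "\<forall>q'\<in>set Q. q' + m < q"
      using snoc.prems(3) earlier by simp
    then have "legal_seq H (A @ S q)"
      using legal_seq_append_block[OF A q] far[OF _ q] S[OF q] by blast
    with True show ?thesis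
      unfolding A_def by simp
  next
    case False
    then have "q + m \<le> n"
      using snoc.prems(4) by simp
    moreover have "cnbhd H v \<inter> block (q + m) = {}" if "v \<in> set A" for v
      using far[OF that, of "q + m"] q \<open>q + m \<le> n\<close> earlier by simp
    ultimately have "legal_seq H (A @ [f q])"
      using legal_seq_snoc_far_block[OF A q _ f[OF q]] by blast
    with False show ?thesis
      unfolding A_def by simp
  qed
qed

definition SP_seq :: "(nat \<Rightarrow> 'a list) \<Rightarrow> (nat \<Rightarrow> 'a) \<Rightarrow> nat set \<Rightarrow> 'a list" where
  "SP_seq S f I = concat (map (\<lambda>j. if j \<in> I then S j else [f j]) (SP m I))"

lemma SP_subset:
  assumes "I \<in> tildeI n m"
  shows "set (SP m I) \<subseteq> {1..n}"
proof -
  have "Min I \<in> I" "Max I \<in> I"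
    using tildeI_D(1,2)[OF assms] by auto
  then show ?thesis
    unfolding set_SP[OF assms] using tildeI_D(3)[OF assms] by fastforce
qed

lemma legal_SP_seq:
  assumes I: "I \<in> tildeI n m"
    and S: "\<And>i. i \<in> {1..n} \<Longrightarrow> legal_seq (R i) (S i)" and f: "\<And>j. j \<in> {1..n} \<Longrightarrow> f j \<in> block j"
  shows "legal_seq H (SP_seq S f I)"
  unfolding SP_seq_def
proof (rule legal_seq_blocks[OF S f sorted_SP[OF I] SP_subset[OF I]])
  show "\<forall>q\<in>set (SP m I). q \<in> I \<longrightarrow> (\<forall>q'\<in>set (SP m I). q' < q \<longrightarrow> q' + m < q)"
    unfolding set_SP[OF I] by blast
  have "Max I \<in> I" "Max I \<le> n"
    using tildeI_D(1-3)[OF I] by auto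
  then have "q + m < n" if "q \<in> set (SP m I)" "q \<notin> I" for q
    using that unfolding set_SP[OF I] by (metis (no_types, lifting) le_neq_implies_less mem_Collect_eq
        order_less_le_trans)
  then show "\<forall>q\<in>set (SP m I). q \<notin> I \<longrightarrow> q + m \<le> n"
    by fastforce
qed

lemma SP_seq_meets_block:
  assumes I: "I \<in> tildeI n m" and q: "q \<in> set (SP m I)"
    and S: "\<And>i. i \<in> {1..n} \<Longrightarrow> legal_dom_seq (R i) (S i)" and f: "\<And>j. j \<in> {1..n} \<Longrightarrow> f j \<in> block j"
  shows "\<exists>x\<in>set (SP_seq S f I). x \<in> block q"
proof -
  have qn: "q \<in> {1..n}"
    using q SP_subset[OF I] by blast
  have "\<exists>x\<in>set (if q \<in> I then S q else [f q]). x \<in> block q"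
  proof (cases "q \<in> I")
    case True
    have "dominated (R q) (S q) = block q" "set (S q) \<subseteq> block q"
      using S[OF qn] unfolding legal_dom_seq_def by auto
    then show ?thesis
      using True block_nonempty[OF qn] by auto
  qed (use f qn in simp)
  moreover have "set (if q \<in> I then S q else [f q]) \<subseteq> set (SP_seq S f I)"
    using q unfolding SP_seq_def by (cases "q \<in> I") auto
  ultimately show ?thesis
    by blast
qed

lemma block_dominated_by_SP_seq:
  assumes I: "I \<in> tildeI n m" and b: "b \<in> {1..n}"
    and S: "\<And>i. i \<in> {1..n} \<Longrightarrow> legal_dom_seq (R i) (S i)" and f: "\<And>j. j \<in> {1..n} \<Longrightarrow> f j \<in> block j"
  shows "block b \<subseteq> dominated H (SP_seq S f I)"
proof (cases "b \<in> I")
  case True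
  have in_seq: "set (S b) \<subseteq> set (SP_seq S f I)"
    using True subset_SP[OF I] unfolding SP_seq_def by auto
  have S_b: "set (S b) \<subseteq> block b" "dominated (R b) (S b) = block b"
    using S[OF b] unfolding legal_dom_seq_def by auto
  show ?thesis
  proof
    fix u assume "u \<in> block b"
    then obtain x where x: "x \<in> set (S b)" "u \<in> cnbhd (R b) x"
      using S_b(2) by blast
    then have "u \<in> cnbhd H x"
      using cnbhd_block_subset_cnbhd_H[OF b] S_b(1) by blast
    with x(1) in_seq show "u \<in> dominated H (SP_seq S f I)"
      by blast
  qed
next
  case False
  then obtain q where q: "q \<in> set (SP m I)" "pp_adj m q b"
    using SP_adj_nonmember[OF I m_pos b] by blast
  moreover have "q \<in> {1..n}"
    using q(1) SP_subset[OF I] by blast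
  moreover obtain x where "x \<in> set (SP_seq S f I)" "x \<in> block q"
    using SP_seq_meets_block[OF I q(1) S f] by blast
  ultimately show ?thesis
    using block_subset_cnbhd_H[of q x b] b by blast
qed

lemma dominated_SP_seq:
  assumes I: "I \<in> tildeI n m"
    and S: "\<And>i. i \<in> {1..n} \<Longrightarrow> legal_dom_seq (R i) (S i)" and f: "\<And>j. j \<in> {1..n} \<Longrightarrow> f j \<in> block j"
  shows "dominated H (SP_seq S f I) = verts H"
proof
  have "legal_seq H (SP_seq S f I)"
    using legal_SP_seq[OF I _ f] S by (simp add: legal_dom_seq_iff)
  then show "dominated H (SP_seq S f I) \<subseteq> verts H"
    unfolding legal_seq_def by (simp add: dominated_subset_verts)
  show "verts H \<subseteq> dominated H (SP_seq S f I)"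
    unfolding verts_H using block_dominated_by_SP_seq[OF I _ S f] by blast
qed

lemma length_SP_seq:
  assumes I: "I \<in> tildeI n m" and S: "\<And>i. i \<in> I \<Longrightarrow> length (S i) = gamma_gr (R i)"
  shows "int (length (SP_seq S f I)) = obj m R I + int m + 1"
proof -
  let ?Q = "set (SP m I)"
  have distinct: "distinct (SP m I)"
    using sorted_SP[OF I] strict_sorted_iff by blast
  have "length (SP_seq S f I) = (\<Sum>q\<in>?Q. length (if q \<in> I then S q else [f q]))"
    unfolding SP_seq_def length_concat map_map comp_def
    using sum_list_distinct_conv_sum_set[OF distinct] by simp
  then have "int (length (SP_seq S f I)) = (\<Sum>q\<in>?Q. 1 + (if q \<in> I then int (gamma_gr (R q)) - 1 else 0))"
    using S by (simp add: of_nat_sum) (intro sum.cong, auto)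
  also have "\<dots> = int (card ?Q) + (\<Sum>q\<in>?Q \<inter> I. int (gamma_gr (R q)) - 1)"
    by (simp add: sum.distrib sum.inter_restrict)
  also have "?Q \<inter> I = I"
    using subset_SP[OF I] by blast
  finally have len: "int (length (SP_seq S f I)) = int (length (SP m I)) + (\<Sum>q\<in>I. int (gamma_gr (R q)) - 1)"
    using distinct_card[OF distinct] by simp
  have "card I \<ge> 1" "Min I \<le> Max I"
    using tildeI_D(1,2)[OF I] by (simp_all add: Suc_le_eq card_gt_0_iff)
  then have "int (m * (card I - 1)) = int m * (int (card I) - 1)"
    and "int (Max I + 1 - Min I) = int (Max I) + 1 - int (Min I)"
    by (simp_all add: of_nat_diff)
  then have "int (length (SP m I)) + int m * (int (card I) - 1) = int (Max I) + 1 - int (Min I)"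
    using length_SP[OF I] by linarith
  with len show ?thesis
    unfolding obj_def by (simp add: algebra_simps)
qed

lemma ends_in_tildeI: "{1, n} \<in> tildeI n m"
  using path_long unfolding tildeI_def indep_pp_def by auto

lemma legal_seq_length_le_Max_obj:
  assumes "legal_seq H s"
  shows "int (length s) \<le> Max (obj m R ` tildeI n m) + int m + 1"
proof -
  interpret xjoin_legal_seq n m R s
    using assms by unfold_locales
  have "obj m R anchors \<le> Max (obj m R ` tildeI n m)"
    using anchors_in_tildeI finite_tildeI by simp
  with length_le_obj_anchors show ?thesis
    by linarith
qed

lemma legal_dom_SP_seq:
  assumes I: "I \<in> tildeI n m"
    and S: "\<And>i. i \<in> {1..n} \<Longrightarrow> grundy_dom_seq (R i) (S i)" and f: "\<And>j. j \<in> {1..n} \<Longrightarrow> f j \<in> block j"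
  shows "legal_dom_seq H (SP_seq S f I)" "int (length (SP_seq S f I)) = obj m R I + int m + 1"
proof -
  have S': "legal_dom_seq (R i) (S i)" "length (S i) = gamma_gr (R i)" if "i \<in> {1..n}" for i
    using S[OF that] grundy_dom_seq_iff[OF finite_block[OF that]] by auto
  then show "legal_dom_seq H (SP_seq S f I)"
    using legal_SP_seq[OF I _ f] dominated_SP_seq[OF I _ f] by (simp add: legal_dom_seq_iff)
  show "int (length (SP_seq S f I)) = obj m R I + int m + 1"
    using length_SP_seq[OF I] S' tildeI_D(3)[OF I] by blast
qed

lemma gamma_gr_H: "int (gamma_gr H) = Max (obj m R ` tildeI n m) + int m + 1"
proof (rule antisym)
  obtain s where s: "legal_dom_seq H s" "length s = gamma_gr H"
    using gamma_gr_attained[OF finite_verts_H] by blast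
  then have "legal_seq H s"
    by (simp add: legal_dom_seq_iff)
  from legal_seq_length_le_Max_obj[OF this] s(2)
  show "int (gamma_gr H) \<le> Max (obj m R ` tildeI n m) + int m + 1"
    by simp
next
  obtain I where I: "I \<in> tildeI n m" "obj m R I = Max (obj m R ` tildeI n m)"
    using Max_in[of "obj m R ` tildeI n m"] finite_tildeI ends_in_tildeI by fastforce
  define S where "S i = (SOME s. grundy_dom_seq (R i) s)" for i
  define f where "f j = (SOME v. v \<in> block j)" for j
  have "grundy_dom_seq (R i) (S i)" if "i \<in> {1..n}" for i
    unfolding S_def using grundy_dom_seq_iff[OF finite_block[OF that]]
      gamma_gr_attained[OF finite_block[OF that]] by (metis someI_ex)
  moreover have "f j \<in> block j" if "j \<in> {1..n}" for j
    unfolding f_def using block_nonempty[OF that] by (simp add: some_in_eq)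
  ultimately have "legal_dom_seq H (SP_seq S f I)"
    and len: "int (length (SP_seq S f I)) = Max (obj m R ` tildeI n m) + int m + 1"
    using legal_dom_SP_seq[OF I(1)] I(2) by auto
  then have "length (SP_seq S f I) \<le> gamma_gr H"
    using legal_seq_length_le_gamma_gr(1)[OF finite_verts_H] by (simp add: legal_dom_seq_iff)
  with len show "Max (obj m R ` tildeI n m) + int m + 1 \<le> int (gamma_gr H)"
    by linarith
qed

lemma grundy_SP_seq:
  assumes "I \<in> tildeI n m" "obj m R I = Max (obj m R ` tildeI n m)"
    and "\<And>i. i \<in> {1..n} \<Longrightarrow> grundy_dom_seq (R i) (S i)" and "\<And>j. j \<in> {1..n} \<Longrightarrow> f j \<in> block j"
  shows "grundy_dom_seq H (SP_seq S f I)"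
  using legal_dom_SP_seq[OF assms(1,3,4)] gamma_gr_H assms(2)
  by (simp add: grundy_dom_seq_iff[OF finite_verts_H])

end

theorem theorem5:
  fixes n m :: nat and R :: "nat \<Rightarrow> 'a graph"
  assumes "1 \<le> m" and "m + 2 \<le> n"
    and "\<forall>i\<in>{1..n}. finite_graph (R i)"
    and "\<forall>i\<in>{1..n}. \<forall>j\<in>{1..n}. i \<noteq> j \<longrightarrow> verts (R i) \<inter> verts (R j) = {}"
  shows "int (gamma_gr (xjoin (path_power n m) R))
           = Max (obj m R ` tildeI n m) + int m + 1 \<and>
         (\<forall>S f Istar.
            (\<forall>i\<in>{1..n}. grundy_dom_seq (R i) (S i)) \<and>
            (\<forall>j\<in>{1..n}. f j \<in> verts (R j)) \<and>
            Istar \<in> tildeI n m \<and>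
            obj m R Istar = Max (obj m R ` tildeI n m)
            \<longrightarrow> grundy_dom_seq (xjoin (path_power n m) R)
                 (concat (map (\<lambda>j. if j \<in> Istar then S j else [f j]) (SP m Istar))))"
proof -
  interpret xjoin_path_power n m R
    using assms by unfold_locales auto
  show ?thesis
    using gamma_gr_H grundy_SP_seq unfolding H_def SP_seq_def by blast
qed

end
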